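(* Let $E=\mathbb{Q}(i,\sqrt5)$, let $\tau=(1+\sqrt5)/2$, and let $\sigma$ be the automorphism of $E$ with $\sigma(i)=i$ and $\sigma(\sqrt5)=-\sqrt5$. For a real number $N\ge 1$ let $\mathbf{L}(N)$ be the set of numbers $x=(a+bi)+(c+di)\tau\in E$ with $a,b,c,d\in\mathbb{Z}$ and $|a|,|b|,|c|,|d|\le N$. For $x_1,x_2\in E$ put $$X(x_1,x_2)=\begin{pmatrix} x_1 & \sigma(x_1)\\ i\,x_2 & \sigma(x_2)\end{pmatrix},$$ and define the decay function $$D(N_1,N_2)=\min_{x_1\in\mathbf{L}(N_1)\setminus\{0\},\ x_2\in\mathbf{L}(N_2)\setminus\{0\}}\left|\det X(x_1,x_2)\right|.$$ Then there exists a constant $K>0$ such that for all sufficiently large $N_1,N_2$, $$D(N_1,N_2)\ge\frac{K}{N_1N_2}.$$ In particular, $D(N,N)\ge K/N^2$ for all sufficiently large $N$.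
   Context: This is the two-user single-antenna Badr–Belfiore multiuser MIMO code: user 1 transmits the row $(x_1,\sigma(x_1))$ and user 2 the row $(i x_2,\sigma(x_2))$; the determinant $\det X(x_1,x_2)$ is nonzero whenever $x_1\neq 0$ and $x_2\neq0$, so $D$ takes positive values. *)

theory Defs
  imports Complex_Main
begin

definition gauss_rat :: "complex set" where
  "gauss_rat = {Complex (of_rat p) (of_rat q) | p q. True}"

definition E_field :: "complex set" where
  "E_field = {p + complex_of_real (sqrt 5) * q | p q. p \<in> gauss_rat \<and> q \<in> gauss_rat}"

definition sigma :: "complex \<Rightarrow> complex" where
  "sigma z = (THE w. \<exists>p q. p \<in> gauss_rat \<and> q \<in> gauss_rat \<and>
                 z = p + complex_of_real (sqrt 5) * q \<and> w = p - complex_of_real (sqrt 5) * q)"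

definition tau :: real where
  "tau = (1 + sqrt 5) / 2"

definition Lset :: "real \<Rightarrow> complex set" where
  "Lset N = {(of_int a + \<i> * of_int b) + (of_int c + \<i> * of_int d) * complex_of_real tau
             | a b c d :: int. \<bar>real_of_int a\<bar> \<le> N \<and> \<bar>real_of_int b\<bar> \<le> N
                 \<and> \<bar>real_of_int c\<bar> \<le> N \<and> \<bar>real_of_int d\<bar> \<le> N}"

text \<open>Determinant of X(x1,x2) = [[x1, sigma x1], [i x2, sigma x2]].\<close>
definition detX :: "complex \<Rightarrow> complex \<Rightarrow> complex" where
  "detX x1 x2 = x1 * sigma x2 - \<i> * x2 * sigma x1"

definition decay :: "real \<Rightarrow> real \<Rightarrow> real" where
  "decay N1 N2 = Min {cmod (detX x1 x2) | x1 x2.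
                       x1 \<in> Lset N1 - {0} \<and> x2 \<in> Lset N2 - {0}}"

end

theory Submission imports Defs "HOL-Computational_Algebra.Primes" begin

text \<open>Write \<open>2x = u + v\<surd>5\<close> and \<open>2\<sigma>(x) = u - v\<surd>5\<close> with Gaussian integers \<open>u, v\<close>
  of size \<open>O(N)\<close>. Then \<open>4 det X(x\<^sub>1,x\<^sub>2) = A - iB\<close>, where \<open>A = P + Q\<surd>5\<close> and
  \<open>B = \<sigma>(A) = P - Q\<surd>5\<close> with \<open>P, Q \<in> \<int>[i]\<close> and \<open>|A|, |B| = O(N\<^sub>1N\<^sub>2)\<close>. The relative norm
  \<open>(A - iB)(B - iA) = -2i(P\<^sup>2 + 5Q\<^sup>2)\<close> is a nonzero Gaussian integer by the irrationality
  of \<open>\<surd>5\<close>, so it has modulus at least 2, and dividing by \<open>|B - iA| = O(N\<^sub>1N\<^sub>2)\<close> gives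
  \<open>|det X(x\<^sub>1,x\<^sub>2)| \<ge> K/(N\<^sub>1N\<^sub>2)\<close>.\<close>

lemma sqrt_prime_not_Rats:
  fixes p :: nat
  assumes "prime p"
  shows "sqrt p \<notin> \<rat>"
proof
  assume "sqrt p \<in> \<rat>"
  then obtain m n :: nat where "n \<noteq> 0" and "\<bar>sqrt p\<bar> = m / n" and "coprime m n"
    by (rule Rats_abs_nat_div_natE)
  then have "real m = sqrt p * n" by (simp add: field_simps)
  then have "real (m^2) = real (p * n^2)" by (simp add: power_mult_distrib)
  then have eq: "m^2 = p * n^2" by (simp only: of_nat_eq_iff)
  then have "p dvd m" using assms prime_dvd_power by (metis dvd_triv_left)
  then obtain k where "m = p * k" ..
  with eq have "n^2 = p * k^2" using assms by (simp add: power2_eq_square algebra_simps)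
  then have "p dvd n" using assms prime_dvd_power by (metis dvd_triv_left)
  with \<open>p dvd m\<close> \<open>coprime m n\<close> show False using assms
    by (metis coprime_common_divisor not_prime_unit)
qed

lemma Rats_add_mult_irrational_eq_0:
  assumes "a \<in> \<rat>" "b \<in> \<rat>" "r \<notin> \<rat>" "a + b * r = 0"
  shows "a = 0 \<and> b = 0"
proof (cases "b = 0")
  case True
  with assms show ?thesis by simp
next
  case False
  moreover have "b * r = - a" using assms(4) by (simp add: eq_neg_iff_add_eq_0 add.commute)
  ultimately have "r = - a / b" by (simp add: field_simps)
  with assms(1-3) show ?thesis by simp
qed

abbreviation sqrt5 :: complex where
  "sqrt5 \<equiv> complex_of_real (sqrt 5)"

lemma sqrt5_mult_self: "sqrt5 * sqrt5 = 5"
  unfolding of_real_mult[symmetric] by simp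

lemma gauss_rat_iff: "z \<in> gauss_rat \<longleftrightarrow> Re z \<in> \<rat> \<and> Im z \<in> \<rat>"
proof
  assume "Re z \<in> \<rat> \<and> Im z \<in> \<rat>"
  then obtain p q where "Re z = of_rat p" "Im z = of_rat q" by (auto elim!: Rats_cases)
  then have "z = Complex (of_rat p) (of_rat q)" by (simp add: complex_eqI)
  then show "z \<in> gauss_rat" by (auto simp: gauss_rat_def)
qed (auto simp: gauss_rat_def)

lemma gauss_rat_sqrt5_coords_unique:
  assumes "p \<in> gauss_rat" "q \<in> gauss_rat" "p' \<in> gauss_rat" "q' \<in> gauss_rat"
    and eq: "p + sqrt5 * q = p' + sqrt5 * q'"
  shows "p = p' \<and> q = q'"
proof -
  have irr: "sqrt 5 \<notin> \<rat>" using sqrt_prime_not_Rats[of 5] by simp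
  have "(Re p - Re p') + (Re q - Re q') * sqrt 5 = 0"
       "(Im p - Im p') + (Im q - Im q') * sqrt 5 = 0"
    using arg_cong[OF eq, of Re] arg_cong[OF eq, of Im] by (simp_all add: algebra_simps)
  moreover have "Re p - Re p' \<in> \<rat>" "Re q - Re q' \<in> \<rat>" "Im p - Im p' \<in> \<rat>" "Im q - Im q' \<in> \<rat>"
    using assms(1-4) by (simp_all add: gauss_rat_iff)
  ultimately have "Re p - Re p' = 0 \<and> Re q - Re q' = 0" "Im p - Im p' = 0 \<and> Im q - Im q' = 0"
    using Rats_add_mult_irrational_eq_0[OF _ _ irr] by blast+
  then show ?thesis by (simp add: complex_eq_iff)
qed

lemma sigma_sqrt5:
  assumes "p \<in> gauss_rat" "q \<in> gauss_rat"
  shows "sigma (p + sqrt5 * q) = p - sqrt5 * q"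
  unfolding sigma_def
proof (rule the_equality)
  fix w
  assume "\<exists>p' q'. p' \<in> gauss_rat \<and> q' \<in> gauss_rat \<and> p + sqrt5 * q = p' + sqrt5 * q'
                  \<and> w = p' - sqrt5 * q'"
  then obtain p' q' where "p' \<in> gauss_rat" "q' \<in> gauss_rat"
      "p + sqrt5 * q = p' + sqrt5 * q'" "w = p' - sqrt5 * q'"
    by blast
  with assms show "w = p - sqrt5 * q"
    using gauss_rat_sqrt5_coords_unique by metis
qed (use assms in blast)

definition gauss_int :: "complex set" where
  "gauss_int = {z. Re z \<in> \<int> \<and> Im z \<in> \<int>}"

lemma gauss_int_subset_gauss_rat: "gauss_int \<subseteq> gauss_rat"
  by (auto simp: gauss_int_def gauss_rat_iff Ints_subset_Rats[THEN subsetD])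

lemma gauss_int_norm_ge_1:
  assumes "z \<in> gauss_int" "z \<noteq> 0"
  shows "1 \<le> cmod z"
proof (cases "Re z = 0")
  case True
  with assms have "1 \<le> \<bar>Im z\<bar>"
    by (auto simp: gauss_int_def complex_eq_iff intro: Ints_nonzero_abs_ge1)
  then show ?thesis using abs_Im_le_cmod order_trans by blast
next
  case False
  with assms have "1 \<le> \<bar>Re z\<bar>"
    by (auto simp: gauss_int_def intro: Ints_nonzero_abs_ge1)
  then show ?thesis using abs_Re_le_cmod order_trans by blast
qed

lemma gauss_int_sqrt5_eq_0:
  assumes "u \<in> gauss_int" "v \<in> gauss_int" "u + v * sqrt5 = 0"
  shows "u = 0 \<and> v = 0"
proof -
  have "u \<in> gauss_rat" "v \<in> gauss_rat" "0 \<in> gauss_rat"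
    using assms gauss_int_subset_gauss_rat by (auto simp: gauss_rat_iff)
  moreover have "u + sqrt5 * v = 0 + sqrt5 * 0" using assms(3) by (simp add: mult.commute)
  ultimately show ?thesis by (blast dest: gauss_rat_sqrt5_coords_unique)
qed

lemma cmod_of_int_gauss_le: "cmod (of_int a + \<i> * of_int b) \<le> \<bar>real_of_int a\<bar> + \<bar>real_of_int b\<bar>"
  using norm_triangle_ineq[of "of_int a" "\<i> * of_int b"] by (simp add: norm_mult)

text \<open>Since \<open>\<tau> = (1 + \<surd>5)/2\<close>, the element \<open>\<alpha> + \<beta>\<tau>\<close> of \<open>L(N)\<close> has coordinates
  \<open>u = 2\<alpha> + \<beta>\<close> and \<open>v = \<beta>\<close>.\<close>
lemma Lset_sqrt5_coords:
  assumes "x \<in> Lset N"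
  obtains u v where "u \<in> gauss_int" "v \<in> gauss_int"
    "2 * x = u + v * sqrt5" "2 * sigma x = u - v * sqrt5"
    "cmod (u + v * sqrt5) \<le> 12 * N" "cmod (u - v * sqrt5) \<le> 12 * N"
proof -
  obtain a b c d :: int
    where x: "x = (of_int a + \<i> * of_int b) + (of_int c + \<i> * of_int d) * complex_of_real tau"
      and h: "\<bar>real_of_int a\<bar> \<le> N" "\<bar>real_of_int b\<bar> \<le> N" "\<bar>real_of_int c\<bar> \<le> N" "\<bar>real_of_int d\<bar> \<le> N"
    using assms unfolding Lset_def by blast
  define \<alpha> where "\<alpha> = of_int a + \<i> * (of_int b :: complex)"
  define \<beta> where "\<beta> = of_int c + \<i> * (of_int d :: complex)"
  define u where "u = 2 * \<alpha> + \<beta>"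
  have x': "x = (\<alpha> + \<beta> / 2) + sqrt5 * (\<beta> / 2)"
    unfolding x \<alpha>_def \<beta>_def tau_def by (simp add: field_simps)
  have "\<alpha> + \<beta> / 2 \<in> gauss_rat" "\<beta> / 2 \<in> gauss_rat"
    unfolding gauss_rat_iff \<alpha>_def \<beta>_def by auto
  then have \<sigma>x: "sigma x = (\<alpha> + \<beta> / 2) - sqrt5 * (\<beta> / 2)"
    unfolding x' by (rule sigma_sqrt5)
  have "cmod \<alpha> \<le> 2 * N" "cmod \<beta> \<le> 2 * N"
    using cmod_of_int_gauss_le[of a b] cmod_of_int_gauss_le[of c d] h
    unfolding \<alpha>_def \<beta>_def by linarith+
  moreover have "sqrt 5 \<le> 3" by (rule real_le_lsqrt) auto
  ultimately have "cmod u \<le> 6 * N" "cmod (\<beta> * sqrt5) \<le> 6 * N"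
    using norm_triangle_ineq[of "2 * \<alpha>" \<beta>] h(1)
    by (auto simp: u_def norm_mult intro!: mult_mono[of _ "2 * N" _ 3, simplified])
  then have bounds: "cmod (u + \<beta> * sqrt5) \<le> 12 * N" "cmod (u - \<beta> * sqrt5) \<le> 12 * N"
    using norm_triangle_ineq[of u "\<beta> * sqrt5"] norm_triangle_ineq4[of u "\<beta> * sqrt5"] by linarith+
  have "2 * x = u + \<beta> * sqrt5" unfolding x' u_def by (simp add: algebra_simps)
  moreover have "2 * sigma x = u - \<beta> * sqrt5" unfolding \<sigma>x u_def by (simp add: algebra_simps)
  moreover have "u \<in> gauss_int" "\<beta> \<in> gauss_int"
    unfolding u_def \<alpha>_def \<beta>_def by (auto simp: gauss_int_def)
  ultimately show thesis using that[OF _ _ _ _ bounds] by blast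
qed

lemma relative_norm_ge_2:
  assumes "u1 \<in> gauss_int" "v1 \<in> gauss_int" "u2 \<in> gauss_int" "v2 \<in> gauss_int"
    and "u1 + v1 * sqrt5 \<noteq> 0" "u2 + v2 * sqrt5 \<noteq> 0"
  defines "A \<equiv> (u1 + v1 * sqrt5) * (u2 - v2 * sqrt5)"
    and "B \<equiv> (u2 + v2 * sqrt5) * (u1 - v1 * sqrt5)"
  shows "2 \<le> cmod ((A - \<i> * B) * (B - \<i> * A))"
proof -
  define P where "P = u1 * u2 - 5 * v1 * v2"
  define Q where "Q = v1 * u2 - u1 * v2"
  have PQ: "P \<in> gauss_int" "Q \<in> gauss_int"
    unfolding P_def Q_def using assms(1-4)
    by (auto simp: gauss_int_def)
  have A: "A = P + Q * sqrt5" and B: "B = P - Q * sqrt5"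
    unfolding A_def B_def P_def Q_def
    by (simp_all add: algebra_simps sqrt5_mult_self flip: mult.assoc)
  have "u2 - v2 * sqrt5 \<noteq> 0"
    using gauss_int_sqrt5_eq_0[of u2 "- v2"] assms(3,4,6) by (auto simp: gauss_int_def)
  with assms(5) have "A \<noteq> 0" unfolding A_def by simp
  then have "\<not> (P = 0 \<and> Q = 0)" unfolding A by auto
  moreover have AB: "A - \<i> * B = (1 - \<i>) * P + ((1 + \<i>) * Q) * sqrt5"
      "B - \<i> * A = (1 - \<i>) * P + (- (1 + \<i>) * Q) * sqrt5"
    unfolding A B by (simp_all add: algebra_simps)
  ultimately have "A - \<i> * B \<noteq> 0" "B - \<i> * A \<noteq> 0"
    using gauss_int_sqrt5_eq_0[of "(1 - \<i>) * P" "(1 + \<i>) * Q"]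
          gauss_int_sqrt5_eq_0[of "(1 - \<i>) * P" "- (1 + \<i>) * Q"] PQ
    by (auto simp: gauss_int_def complex_eq_iff)
  then have "(A - \<i> * B) * (B - \<i> * A) \<noteq> 0" by simp
  moreover have norm_eq: "(A - \<i> * B) * (B - \<i> * A) = -2 * \<i> * (P^2 + 5 * Q^2)"
  proof -
    have "\<i> * \<i> = -1" by simp
    then show ?thesis unfolding A B using sqrt5_mult_self by algebra
  qed
  ultimately have "1 \<le> cmod (P^2 + 5 * Q^2)"
    using PQ by (intro gauss_int_norm_ge_1)
      (auto simp: power2_eq_square gauss_int_def)
  then show ?thesis unfolding norm_eq by (simp add: norm_mult)
qed

lemma cmod_detX_ge:
  assumes "x1 \<in> Lset N1" "x1 \<noteq> 0" "x2 \<in> Lset N2" "x2 \<noteq> 0"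
  shows "1 / (576 * N1 * N2) \<le> cmod (detX x1 x2)"
proof -
  obtain u1 v1 where c1: "u1 \<in> gauss_int" "v1 \<in> gauss_int"
      "2 * x1 = u1 + v1 * sqrt5" "2 * sigma x1 = u1 - v1 * sqrt5"
      "cmod (u1 + v1 * sqrt5) \<le> 12 * N1" "cmod (u1 - v1 * sqrt5) \<le> 12 * N1"
    using Lset_sqrt5_coords[OF assms(1)] .
  obtain u2 v2 where c2: "u2 \<in> gauss_int" "v2 \<in> gauss_int"
      "2 * x2 = u2 + v2 * sqrt5" "2 * sigma x2 = u2 - v2 * sqrt5"
      "cmod (u2 + v2 * sqrt5) \<le> 12 * N2" "cmod (u2 - v2 * sqrt5) \<le> 12 * N2"
    using Lset_sqrt5_coords[OF assms(3)] .
  define A where "A = (u1 + v1 * sqrt5) * (u2 - v2 * sqrt5)"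
  define B where "B = (u2 + v2 * sqrt5) * (u1 - v1 * sqrt5)"
  have "N1 \<ge> 0" "N2 \<ge> 0"
    using c1(5) c2(5) norm_ge_zero[of "u1 + v1 * sqrt5"] norm_ge_zero[of "u2 + v2 * sqrt5"]
    by linarith+
  then have "cmod A \<le> 144 * N1 * N2" "cmod B \<le> 144 * N1 * N2"
    unfolding A_def B_def norm_mult
    using mult_mono[OF c1(5) c2(6)] mult_mono[OF c2(5) c1(6)] by (simp_all add: mult_ac)
  then have B_iA: "cmod (B - \<i> * A) \<le> 288 * N1 * N2"
    using norm_triangle_ineq4[of B "\<i> * A"] by (simp add: norm_mult)
  have det: "4 * detX x1 x2 = A - \<i> * B"
    unfolding A_def B_def c1(3,4)[symmetric] c2(3,4)[symmetric] detX_def by simp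
  have "u1 + v1 * sqrt5 \<noteq> 0" "u2 + v2 * sqrt5 \<noteq> 0"
    using assms(2,4) by (simp_all flip: c1(3) c2(3))
  then have "2 \<le> cmod ((A - \<i> * B) * (B - \<i> * A))"
    unfolding A_def B_def by (rule relative_norm_ge_2[OF c1(1,2) c2(1,2)])
  also have "\<dots> = 4 * cmod (detX x1 x2) * cmod (B - \<i> * A)"
    unfolding det[symmetric] by (simp add: norm_mult)
  also have "\<dots> \<le> 4 * cmod (detX x1 x2) * (288 * N1 * N2)"
    using B_iA by (intro mult_left_mono) simp_all
  finally have "1 \<le> cmod (detX x1 x2) * (576 * N1 * N2)" by (simp add: mult_ac)
  moreover from this have "0 < 576 * N1 * N2"
    using \<open>N1 \<ge> 0\<close> \<open>N2 \<ge> 0\<close> by (cases "N1 * N2 = 0") auto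
  ultimately show ?thesis by (simp add: field_simps)
qed

lemma finite_Lset: "finite (Lset N)"
proof -
  let ?I = "{a :: int. \<bar>real_of_int a\<bar> \<le> N}"
  have "?I \<subseteq> {-\<lceil>N\<rceil>..\<lceil>N\<rceil>}"
    by (auto simp: abs_le_iff) linarith+
  then have "finite ?I" by (rule finite_subset) simp
  moreover have "Lset N \<subseteq> (\<lambda>(a, b, c, d). (of_int a + \<i> * of_int b)
      + (of_int c + \<i> * of_int d) * complex_of_real tau) ` (?I \<times> ?I \<times> ?I \<times> ?I)"
  proof
    fix x
    assume "x \<in> Lset N"
    then obtain a b c d where "(a, b, c, d) \<in> ?I \<times> ?I \<times> ?I \<times> ?I"
        "x = (of_int a + \<i> * of_int b) + (of_int c + \<i> * of_int d) * complex_of_real tau"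
      unfolding Lset_def by blast
    then show "x \<in> (\<lambda>(a, b, c, d). (of_int a + \<i> * of_int b)
      + (of_int c + \<i> * of_int d) * complex_of_real tau) ` (?I \<times> ?I \<times> ?I \<times> ?I)"
      by (intro rev_image_eqI[of "(a, b, c, d)"]) simp_all
  qed
  ultimately show ?thesis by (meson finite_SigmaI finite_imageI finite_subset)
qed

lemma one_in_Lset: "1 \<le> N \<Longrightarrow> 1 \<in> Lset N"
  unfolding Lset_def by (rule CollectI, intro exI[of _ 1] exI[of _ 0]) simp

lemma decay_attained:
  assumes "1 \<le> N1" "1 \<le> N2"
  obtains x1 x2 where "x1 \<in> Lset N1" "x1 \<noteq> 0" "x2 \<in> Lset N2" "x2 \<noteq> 0"
    "decay N1 N2 = cmod (detX x1 x2)"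
proof -
  let ?S = "{cmod (detX x1 x2) | x1 x2. x1 \<in> Lset N1 - {0} \<and> x2 \<in> Lset N2 - {0}}"
  have "?S = (\<lambda>(x1, x2). cmod (detX x1 x2)) ` ((Lset N1 - {0}) \<times> (Lset N2 - {0}))"
    by auto
  then have "finite ?S" using finite_Lset by simp
  moreover have "?S \<noteq> {}"
    using one_in_Lset[OF assms(1)] one_in_Lset[OF assms(2)] by (auto intro!: exI[of _ 1])
  ultimately have "decay N1 N2 \<in> ?S" unfolding decay_def by (rule Min_in)
  with that show thesis by blast
qed

theorem theorem2p3:
  shows "\<exists>K>0. \<exists>N0. \<forall>N1 N2. N0 \<le> N1 \<longrightarrow> N0 \<le> N2 \<longrightarrow>
           K / (N1 * N2) \<le> decay N1 N2"
proof (intro exI conjI allI impI)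
  fix N1 N2 :: real
  assume "1 \<le> N1" "1 \<le> N2"
  then obtain x1 x2 where "x1 \<in> Lset N1" "x1 \<noteq> 0" "x2 \<in> Lset N2" "x2 \<noteq> 0"
      and "decay N1 N2 = cmod (detX x1 x2)"
    by (rule decay_attained)
  then show "(1 / 576) / (N1 * N2) \<le> decay N1 N2"
    using cmod_detX_ge by (simp add: mult.assoc)
qed simp

end
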